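(* Let $F$ be a field and let $f=\sum_{\sigma\in S_d}\lambda_\sigma x_{\sigma(1)}\cdots x_{\sigma(d)}\in F\langle X\rangle$ be a multilinear polynomial of degree $d\ge 2$ with $\sum_{\sigma\in S_d}\lambda_\sigma\neq 0$. Let $\mathcal A$ be a unital $F$-algebra and let $\phi:\mathcal A\to\mathcal A$ be a linear map that preserves zeros of $f$ and satisfies $\phi(1)\in F^*\cdot 1$. If $a,b\in\mathcal A$ satisfy $ab=ba=0$, then $\phi(a)\phi(b)+\phi(b)\phi(a)=0$.
   Context: $F\langle X\rangle$ is the free algebra over $F$ in noncommuting indeterminates $x_1,x_2,\ldots$. A map $\phi$ on an $F$-algebra $\mathcal A$ preserves zeros of $f$ if for all $a_1,\ldots,a_d\in\mathcal A$, $f(a_1,\ldots,a_d)=0$ implies $f(\phi(a_1),\ldots,\phi(a_d))=0$. *)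

theory Defs
  imports "HOL-Combinatorics.Permutations"
begin

definition unital_algebra :: "('f::field \<Rightarrow> 'a::ring_1 \<Rightarrow> 'a) \<Rightarrow> bool" where
  "unital_algebra smul \<longleftrightarrow>
     (\<forall>c x y. smul c (x + y) = smul c x + smul c y) \<and>
     (\<forall>c e x. smul (c + e) x = smul c x + smul e x) \<and>
     (\<forall>c e x. smul c (smul e x) = smul (c * e) x) \<and>
     (\<forall>x. smul 1 x = x) \<and>
     (\<forall>c x y. smul c (x * y) = smul c x * y) \<and>
     (\<forall>c x y. smul c (x * y) = x * smul c y)"

definition linear_map :: "('f::field \<Rightarrow> 'a::ring_1 \<Rightarrow> 'a) \<Rightarrow> ('a \<Rightarrow> 'a) \<Rightarrow> bool" where
  "linear_map smul \<phi> \<longleftrightarrow>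
     (\<forall>x y. \<phi> (x + y) = \<phi> x + \<phi> y) \<and> (\<forall>c x. \<phi> (smul c x) = smul c (\<phi> x))"

text \<open>Evaluation of the multilinear polynomial
 f = sum over sigma in S_d of lam sigma * x_{sigma(0)} ... x_{sigma(d-1)}
 (variables indexed 0..d-1) at the tuple a(0),...,a(d-1).\<close>
definition mlin_eval ::
  "('f::field \<Rightarrow> 'a::ring_1 \<Rightarrow> 'a) \<Rightarrow> nat \<Rightarrow> ((nat \<Rightarrow> nat) \<Rightarrow> 'f) \<Rightarrow> (nat \<Rightarrow> 'a) \<Rightarrow> 'a" where
  "mlin_eval smul d lam a =
     (\<Sum>\<sigma>\<in>{\<sigma>. \<sigma> permutes {..<d}}. smul (lam \<sigma>) (prod_list (map (\<lambda>i. a (\<sigma> i)) [0..<d])))"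

definition preserves_zeros ::
  "('f::field \<Rightarrow> 'a::ring_1 \<Rightarrow> 'a) \<Rightarrow> nat \<Rightarrow> ((nat \<Rightarrow> nat) \<Rightarrow> 'f) \<Rightarrow> ('a \<Rightarrow> 'a) \<Rightarrow> bool" where
  "preserves_zeros smul d lam \<phi> \<longleftrightarrow>
     (\<forall>a. mlin_eval smul d lam a = 0 \<longrightarrow> mlin_eval smul d lam (\<lambda>i. \<phi> (a i)) = 0)"

end

theory Submission
  imports Defs
begin

(* Substitute x into variable 0, y into variable 1 and the scalar c*1 into every
   other variable of the multilinear polynomial f.  In the monomial of sigma, the scalars pull
   out and what remains is x*y or y*x according to whether x occurs before y, i.e. whether
   inv sigma 0 < inv sigma 1.  Hence
       f(x, y, c1, ..., c1) = c^(d-2) (alpha xy + beta yx),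
   where alpha, beta are the sums of the coefficients of the two kinds of monomials and
   alpha + beta is the (nonzero) sum of all coefficients.
   If xy = yx = 0 this vanishes (taking c = 1); since phi(1) = c1 with c nonzero, zero
   preservation gives alpha phi(x)phi(y) + beta phi(y)phi(x) = 0.  Applying this to (a,b) and
   to (b,a) and adding yields (alpha + beta)(phi(a)phi(b) + phi(b)phi(a)) = 0.
   Of phi only the value phi(1) enters the argument. *)

lemma unital_algebra_rules:
  assumes "unital_algebra smul"
  shows smul_one_mult: "\<And>c z. smul c 1 * z = smul c z"
    and mult_smul_right: "\<And>e z w. z * smul e w = smul e (z * w)"
    and mult_smul_left: "\<And>e z w. smul e z * w = smul e (z * w)"
    and smul_zero_left: "\<And>z. smul 0 z = 0"
    and smul_zero_right: "\<And>c. smul c 0 = 0"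
    and smul_smul: "\<And>c e z. smul c (smul e z) = smul (c * e) z"
    and smul_one: "\<And>z. smul 1 z = z"
    and smul_add_left: "\<And>c e z. smul (c + e) z = smul c z + smul e z"
    and smul_add_right: "\<And>c z w. smul c (z + w) = smul c z + smul c w"
proof -
  note u = assms[unfolded unital_algebra_def]
  show "\<And>c z. smul c 1 * z = smul c z" by (metis u mult_1_left)
  show "\<And>z. smul 0 z = 0" "\<And>c. smul c 0 = 0" by (metis u add_cancel_right_right add_0)+
  show "\<And>e z w. z * smul e w = smul e (z * w)" "\<And>e z w. smul e z * w = smul e (z * w)"
    "\<And>c e z. smul c (smul e z) = smul (c * e) z" "\<And>z. smul 1 z = z"
    "\<And>c e z. smul (c + e) z = smul c z + smul e z" "\<And>c z w. smul c (z + w) = smul c z + smul c w"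
    using u by auto
qed

lemma smul_eq_zero_cancel:
  assumes ua: "unital_algebra smul" and "c \<noteq> 0" and "smul c z = 0"
  shows "z = 0"
proof -
  have "z = smul (inverse c * c) z" using \<open>c \<noteq> 0\<close> by (simp add: smul_one[OF ua])
  also have "\<dots> = smul (inverse c) (smul c z)" by (simp add: smul_smul[OF ua])
  finally show ?thesis using \<open>smul c z = 0\<close> by (simp add: smul_zero_right[OF ua])
qed

lemma smul_commute:
  assumes "unital_algebra smul"
  shows "smul p (smul q z) = smul q (smul p z)"
  by (metis smul_smul[OF assms] mult.commute)

lemma smul_sum_left:
  assumes "unital_algebra smul" "finite A"
  shows "smul (\<Sum>x\<in>A. g x) z = (\<Sum>x\<in>A. smul (g x) z)"
  using assms(2)
  by (induction A rule: finite_induct)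
     (auto simp: smul_zero_left[OF assms(1)] smul_add_left[OF assms(1)])

lemma smul_sum_right:
  assumes "unital_algebra smul" "finite A"
  shows "smul c (\<Sum>x\<in>A. g x) = (\<Sum>x\<in>A. smul c (g x))"
  using assms(2)
  by (induction A rule: finite_induct)
     (auto simp: smul_zero_right[OF assms(1)] smul_add_right[OF assms(1)])

lemma prod_list_scalar_factors:
  assumes ua: "unital_algebra smul"
    and scalar: "\<And>k. k \<notin> S \<Longrightarrow> h k = smul c 1"
  shows "prod_list (map h xs) = smul (c ^ length (filter (\<lambda>k. k \<notin> S) xs))
            (prod_list (map h (filter (\<lambda>k. k \<in> S) xs)))"
proof (induction xs)
  case Nil
  then show ?case by (simp add: smul_one[OF ua])
next
  case (Cons k xs)
  then show ?case
    using scalar[of k]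
    by (cases "k \<in> S")
       (simp_all add: mult_smul_right[OF ua] smul_one_mult[OF ua] smul_smul[OF ua] mult.commute)
qed

lemma filter_two_positions:
  assumes "i < d" "j < d" "i \<noteq> j"
  shows "filter (\<lambda>k. k \<in> {i, j}) [0..<d] = (if i < j then [i, j] else [j, i])"
    and "length (filter (\<lambda>k. k \<notin> {i, j}) [0..<d]) = d - 2"
proof -
  show filt: "filter (\<lambda>k. k \<in> {i, j}) [0..<d] = (if i < j then [i, j] else [j, i])"
  proof (rule sorted_distinct_set_unique)
    show "sorted (filter (\<lambda>k. k \<in> {i, j}) [0..<d])"
      using sorted_upt sorted_wrt_filter by blast
  qed (use assms in auto)
  have "length (filter (\<lambda>k. k \<in> {i, j}) [0..<d])
      + length (filter (\<lambda>k. k \<notin> {i, j}) [0..<d]) = d"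
    by (metis sum_length_filter_compl length_upt minus_nat.diff_0)
  then show "length (filter (\<lambda>k. k \<notin> {i, j}) [0..<d]) = d - 2"
    unfolding filt by (simp split: if_splits)
qed

definition two_point :: "('f \<Rightarrow> 'a::ring_1 \<Rightarrow> 'a) \<Rightarrow> 'f \<Rightarrow> 'a \<Rightarrow> 'a \<Rightarrow> nat \<Rightarrow> 'a" where
  "two_point smul c x y = (\<lambda>k. if k = 0 then x else if k = 1 then y else smul c 1)"

text \<open>The sums of the coefficients of the monomials in which x_0 precedes x_1, resp.
  x_1 precedes x_0.\<close>

definition coeff_01 :: "nat \<Rightarrow> ((nat \<Rightarrow> nat) \<Rightarrow> 'f::field) \<Rightarrow> 'f" where
  "coeff_01 d lam = (\<Sum>\<sigma>\<in>{\<sigma>. \<sigma> permutes {..<d} \<and> inv \<sigma> 0 < inv \<sigma> 1}. lam \<sigma>)"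

definition coeff_10 :: "nat \<Rightarrow> ((nat \<Rightarrow> nat) \<Rightarrow> 'f::field) \<Rightarrow> 'f" where
  "coeff_10 d lam = (\<Sum>\<sigma>\<in>{\<sigma>. \<sigma> permutes {..<d} \<and> \<not> inv \<sigma> 0 < inv \<sigma> 1}. lam \<sigma>)"

lemma coeff_01_plus_10:
  "coeff_01 d lam + coeff_10 d lam = (\<Sum>\<sigma>\<in>{\<sigma>. \<sigma> permutes {..<d}}. lam \<sigma>)"
proof -
  have "(\<Sum>\<sigma>\<in>{\<sigma>. \<sigma> permutes {..<d}}. lam \<sigma>) =
      (\<Sum>\<sigma>\<in>{\<sigma>. \<sigma> permutes {..<d}}. if inv \<sigma> 0 < inv \<sigma> 1 then lam \<sigma> else lam \<sigma>)"
    by simp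
  also have "\<dots> = coeff_01 d lam + coeff_10 d lam"
    using finite_permutations[OF finite_lessThan] unfolding coeff_01_def coeff_10_def
    by (simp only: sum.If_cases) (simp add: Int_def conj_commute)
  finally show ?thesis by simp
qed

lemma monomial_two_point:
  assumes ua: "unital_algebra smul" and d: "d \<ge> 2" and sp: "\<sigma> permutes {..<d}"
  shows "prod_list (map (\<lambda>i. two_point smul c x y (\<sigma> i)) [0..<d]) =
      smul (c ^ (d - 2)) (if inv \<sigma> 0 < inv \<sigma> 1 then x * y else y * x)"
proof -
  define i where "i = inv \<sigma> 0"
  define j where "j = inv \<sigma> 1"
  have si: "\<sigma> i = 0" "\<sigma> j = 1"
    unfolding i_def j_def using permutes_inverses(1)[OF sp] by auto
  have ij: "i < d" "j < d" "i \<noteq> j"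
  proof -
    show "i < d" "j < d"
      unfolding i_def j_def using permutes_in_image[OF permutes_inv[OF sp]] d by simp_all
    show "i \<noteq> j" using si by auto
  qed
  have scalar: "two_point smul c x y (\<sigma> k) = smul c 1" if "k \<notin> {i, j}" for k
  proof -
    have "\<sigma> k \<noteq> \<sigma> i" "\<sigma> k \<noteq> \<sigma> j"
      using that inj_eq[OF permutes_inj[OF sp]] by auto
    then show ?thesis unfolding si by (simp add: two_point_def)
  qed
  have "prod_list (map (\<lambda>k. two_point smul c x y (\<sigma> k)) [0..<d]) = smul (c ^ (d - 2))
      (prod_list (map (\<lambda>k. two_point smul c x y (\<sigma> k)) (if i < j then [i, j] else [j, i])))"
    using prod_list_scalar_factors[OF ua, where S = "{i, j}" and xs = "[0..<d]", OF scalar]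
    unfolding filter_two_positions[OF ij] .
  then show ?thesis
    unfolding i_def[symmetric] j_def[symmetric] using si by (simp add: two_point_def)
qed

lemma mlin_eval_two_point:
  assumes ua: "unital_algebra smul" and d: "d \<ge> 2"
  shows "mlin_eval smul d lam (two_point smul c x y) =
     smul (c ^ (d - 2)) (smul (coeff_01 d lam) (x * y) + smul (coeff_10 d lam) (y * x))"
proof -
  let ?P = "{\<sigma>. \<sigma> permutes {..<d}}"
  have fin: "finite ?P" by (simp add: finite_permutations)
  have "mlin_eval smul d lam (two_point smul c x y) =
      (\<Sum>\<sigma>\<in>?P. smul (lam \<sigma>) (smul (c ^ (d - 2)) (if inv \<sigma> 0 < inv \<sigma> 1 then x * y else y * x)))"
    unfolding mlin_eval_def by (rule sum.cong) (auto simp: monomial_two_point[OF ua d])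
  also have "\<dots> = smul (c ^ (d - 2))
      (\<Sum>\<sigma>\<in>?P. if inv \<sigma> 0 < inv \<sigma> 1 then smul (lam \<sigma>) (x * y) else smul (lam \<sigma>) (y * x))"
    unfolding smul_sum_right[OF ua fin]
    by (rule sum.cong) (auto simp: smul_commute[OF ua, of "lam _"])
  also have "(\<Sum>\<sigma>\<in>?P. if inv \<sigma> 0 < inv \<sigma> 1 then smul (lam \<sigma>) (x * y) else smul (lam \<sigma>) (y * x))
      = smul (coeff_01 d lam) (x * y) + smul (coeff_10 d lam) (y * x)"
    using fin unfolding coeff_01_def coeff_10_def
    by (simp add: sum.If_cases Int_def conj_commute smul_sum_left[OF ua])
  finally show ?thesis .
qed

text \<open>For xy = yx = 0 the tuple (x, y, 1, ..., 1) is a zero of f; its image under phi is the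
  tuple (phi x, phi y, c1, ...), and cancelling c^(d-2) leaves the asymmetric relation below.\<close>

lemma preserves_zeros_zero_product:
  assumes ua: "unital_algebra smul" and d: "d \<ge> 2"
    and pz: "preserves_zeros smul d lam \<phi>"
    and c: "c \<noteq> 0" "\<phi> 1 = smul c 1"
    and xy: "x * y = 0" "y * x = 0"
  shows "smul (coeff_01 d lam) (\<phi> x * \<phi> y) + smul (coeff_10 d lam) (\<phi> y * \<phi> x) = 0"
proof -
  have "mlin_eval smul d lam (two_point smul 1 x y) = 0"
    unfolding mlin_eval_two_point[OF ua d] using xy by (simp add: unital_algebra_rules[OF ua])
  then have "mlin_eval smul d lam (\<lambda>i. \<phi> (two_point smul 1 x y i)) = 0"
    using pz unfolding preserves_zeros_def by blast
  moreover have "(\<lambda>i. \<phi> (two_point smul 1 x y i)) = two_point smul c (\<phi> x) (\<phi> y)"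
    using c(2) by (auto simp: two_point_def smul_one[OF ua])
  ultimately have scaled: "smul (c ^ (d - 2))
      (smul (coeff_01 d lam) (\<phi> x * \<phi> y) + smul (coeff_10 d lam) (\<phi> y * \<phi> x)) = 0"
    by (simp add: mlin_eval_two_point[OF ua d])
  show ?thesis
    using smul_eq_zero_cancel[OF ua _ scaled] c(1) by simp
qed

theorem lemma3p1:
  fixes smul :: "'f::field \<Rightarrow> 'a::ring_1 \<Rightarrow> 'a"
    and d :: nat and lam :: "(nat \<Rightarrow> nat) \<Rightarrow> 'f" and \<phi> :: "'a \<Rightarrow> 'a"
    and a b :: 'a
  assumes "unital_algebra smul"
    and "d \<ge> 2"
    and "(\<Sum>\<sigma>\<in>{\<sigma>. \<sigma> permutes {..<d}}. lam \<sigma>) \<noteq> 0"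
    and "linear_map smul \<phi>"
    and "preserves_zeros smul d lam \<phi>"
    and "\<exists>c. c \<noteq> 0 \<and> \<phi> 1 = smul c 1"
    and "a * b = 0" and "b * a = 0"
  shows "\<phi> a * \<phi> b + \<phi> b * \<phi> a = 0"
proof -
  note ua = assms(1)
  obtain c where c: "c \<noteq> 0" "\<phi> 1 = smul c 1" using assms(6) by blast
  let ?\<alpha> = "coeff_01 d lam" and ?\<beta> = "coeff_10 d lam"
  have ab: "smul ?\<alpha> (\<phi> a * \<phi> b) + smul ?\<beta> (\<phi> b * \<phi> a) = 0"
    and ba: "smul ?\<alpha> (\<phi> b * \<phi> a) + smul ?\<beta> (\<phi> a * \<phi> b) = 0"
    using preserves_zeros_zero_product[OF ua assms(2,5) c] assms(7,8) by blast+
  have "smul (?\<alpha> + ?\<beta>) (\<phi> a * \<phi> b + \<phi> b * \<phi> a) =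
      (smul ?\<alpha> (\<phi> a * \<phi> b) + smul ?\<beta> (\<phi> b * \<phi> a))
      + (smul ?\<alpha> (\<phi> b * \<phi> a) + smul ?\<beta> (\<phi> a * \<phi> b))"
    by (simp add: smul_add_left[OF ua] smul_add_right[OF ua] algebra_simps)
  then have "smul (?\<alpha> + ?\<beta>) (\<phi> a * \<phi> b + \<phi> b * \<phi> a) = 0"
    using ab ba by simp
  moreover have "?\<alpha> + ?\<beta> \<noteq> 0"
    using assms(3) by (simp add: coeff_01_plus_10)
  ultimately show ?thesis by (rule smul_eq_zero_cancel[OF ua, rotated])
qed

end
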